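(* There exists a set $T$ of five terminals in the plane, no two on a common horizontal or vertical line, for which $N_{\varnothing}(T)$ is a bidirected Manhattan network on $T$ but is not of minimum length: its length is $34$, while a bidirected Manhattan network on $T$ of length $32$ exists.
   Context: For points $p,q$, $R(p,q)$ is the smallest closed axis-parallel rectangle containing $p$ and $q$; for terminals ${\bf t}_i,{\bf t}_j\in T$, $R_{i,j}=R({\bf t}_i,{\bf t}_j)$, which is empty if $R_{i,j}\cap T=\{{\bf t}_i,{\bf t}_j\}$. $\Gamma(T)$ is the grid formed by the horizontal and vertical lines through the terminals, restricted to the bounding box of $T$. An oriented subnetwork of $\Gamma(T)$ is a set of edges of $\Gamma(T)$ each directed in exactly one sense; its length is the total length of its edges. A bidirected Manhattan network on $T$ is an oriented subnetwork of $\Gamma(T)$ containing, for every ordered pair of distinct terminals $(t,t')$, a directed path from $t$ to $t'$ of length $|t^x-t'^x|+|t^y-t'^y|$. $N_{\varnothing}(T)$ is the oriented subnetwork consisting of the boundary edges of all empty rectangles $R_{i,j}$, where the boundary of $R_{i,j}$ is oriented clockwise if the segment ${\bf t}_i{\bf t}_j$ has positive slope and counterclockwise if it has negative slope. *)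

theory Defs
  imports Complex_Main
begin

type_synonym point = "real \<times> real"

text \<open>Vertices of the grid Gamma(T): intersections of the horizontal and vertical
lines through the terminals (automatically inside the bounding box of T).\<close>
definition grid_vertices :: "point set \<Rightarrow> point set" where
  "grid_vertices T = fst ` T \<times> snd ` T"

definition grid_edge :: "point set \<Rightarrow> point \<Rightarrow> point \<Rightarrow> bool" where
  "grid_edge T u v \<longleftrightarrow> u \<in> grid_vertices T \<and> v \<in> grid_vertices T \<and> u \<noteq> v \<and>
     ((snd u = snd v \<and> \<not> (\<exists>x\<in>fst ` T. min (fst u) (fst v) < x \<and> x < max (fst u) (fst v))) \<or>
      (fst u = fst v \<and> \<not> (\<exists>y\<in>snd ` T. min (snd u) (snd v) < y \<and> y < max (snd u) (snd v))))"

definition oriented_subnetwork :: "point set \<Rightarrow> (point \<times> point) set \<Rightarrow> bool" where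
  "oriented_subnetwork T N \<longleftrightarrow>
     (\<forall>(u, v)\<in>N. grid_edge T u v) \<and> (\<forall>(u, v)\<in>N. (v, u) \<notin> N)"

definition l1dist :: "point \<Rightarrow> point \<Rightarrow> real" where
  "l1dist p q = \<bar>fst p - fst q\<bar> + \<bar>snd p - snd q\<bar>"

definition edge_len :: "point \<times> point \<Rightarrow> real" where
  "edge_len e = l1dist (fst e) (snd e)"

definition net_length :: "(point \<times> point) set \<Rightarrow> real" where
  "net_length N = (\<Sum>e\<in>N. edge_len e)"

definition is_dpath :: "(point \<times> point) set \<Rightarrow> point \<Rightarrow> point \<Rightarrow> point list \<Rightarrow> bool" where
  "is_dpath N s t ps \<longleftrightarrow> ps \<noteq> [] \<and> hd ps = s \<and> last ps = t \<and>
     (\<forall>e\<in>set (zip ps (tl ps)). e \<in> N)"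

definition path_len :: "point list \<Rightarrow> real" where
  "path_len ps = sum_list (map edge_len (zip ps (tl ps)))"

definition bidirected_manhattan :: "point set \<Rightarrow> (point \<times> point) set \<Rightarrow> bool" where
  "bidirected_manhattan T N \<longleftrightarrow> oriented_subnetwork T N \<and>
     (\<forall>t\<in>T. \<forall>t'\<in>T. t \<noteq> t' \<longrightarrow> (\<exists>ps. is_dpath N t t' ps \<and> path_len ps = l1dist t t'))"

definition rect :: "point \<Rightarrow> point \<Rightarrow> point set" where
  "rect p q = {z. min (fst p) (fst q) \<le> fst z \<and> fst z \<le> max (fst p) (fst q) \<and>
                  min (snd p) (snd q) \<le> snd z \<and> snd z \<le> max (snd p) (snd q)}"

definition empty_rect :: "point set \<Rightarrow> point \<Rightarrow> point \<Rightarrow> bool" where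
  "empty_rect T p q \<longleftrightarrow> rect p q \<inter> T = {p, q}"

text \<open>Directed grid edges on the boundary of R(p,q), oriented clockwise
(standard orientation, y axis pointing up): top side left to right, right side
downwards, bottom side right to left, left side upwards.\<close>
definition cw_boundary :: "point set \<Rightarrow> point \<Rightarrow> point \<Rightarrow> (point \<times> point) set" where
  "cw_boundary T p q =
    (let x1 = min (fst p) (fst q); x2 = max (fst p) (fst q);
         y1 = min (snd p) (snd q); y2 = max (snd p) (snd q) in
     {(u, v). grid_edge T u v \<and>
       ((snd u = y2 \<and> snd v = y2 \<and> x1 \<le> fst u \<and> fst u < fst v \<and> fst v \<le> x2) \<or>
        (fst u = x2 \<and> fst v = x2 \<and> y1 \<le> snd v \<and> snd v < snd u \<and> snd u \<le> y2) \<or>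
        (snd u = y1 \<and> snd v = y1 \<and> x1 \<le> fst v \<and> fst v < fst u \<and> fst u \<le> x2) \<or>
        (fst u = x1 \<and> fst v = x1 \<and> y1 \<le> snd u \<and> snd u < snd v \<and> snd v \<le> y2))})"

definition ccw_boundary :: "point set \<Rightarrow> point \<Rightarrow> point \<Rightarrow> (point \<times> point) set" where
  "ccw_boundary T p q = {(v, u) | u v. (u, v) \<in> cw_boundary T p q}"

definition oriented_boundary :: "point set \<Rightarrow> point \<Rightarrow> point \<Rightarrow> (point \<times> point) set" where
  "oriented_boundary T p q =
     (if (fst q - fst p) * (snd q - snd p) > 0 then cw_boundary T p q
      else if (fst q - fst p) * (snd q - snd p) < 0 then ccw_boundary T p q
      else {})"

definition N_empty :: "point set \<Rightarrow> (point \<times> point) set" where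
  "N_empty T = (\<Union>p\<in>T. \<Union>q\<in>T. if p \<noteq> q \<and> empty_rect T p q then oriented_boundary T p q else {})"

end

theory Submission
  imports Defs
begin

(* The witness is T0 = {(0,1), (1,0), (2,3), (3,4), (4,2)}: its coordinates in both axes are
   exactly 0,...,4, so Gamma(T0) is the unit grid on {0..4}^2 and its edges are the unit
   steps between lattice points.  Among the ten pairs of terminals, eight span empty
   rectangles (only R((0,1),(3,4)) and R((1,0),(3,4)) contain (2,3)); the union of their
   oriented boundaries is an explicit set N34 of 34 unit edges.  Dropping the two edges
   through the corner (4,0) leaves a network N32 of length 32 which still contains a
   shortest directed path for each of the 20 ordered terminal pairs; hence N32, and a
   fortiori its superset N_empty(T0), is a bidirected Manhattan network. *)

definition unit_adjacent :: "point \<Rightarrow> point \<Rightarrow> bool" where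
  "unit_adjacent u v \<longleftrightarrow>
     (snd u = snd v \<and> \<bar>fst u - fst v\<bar> = 1) \<or> (fst u = fst v \<and> \<bar>snd u - snd v\<bar> = 1)"

lemma consecutive_in_integer_range:
  fixes a b :: real
  assumes a: "a \<in> real_of_int ` {m..n}" and b: "b \<in> real_of_int ` {m..n}"
  shows "(a \<noteq> b \<and> \<not> (\<exists>x\<in>real_of_int ` {m..n}. min a b < x \<and> x < max a b)) \<longleftrightarrow> \<bar>a - b\<bar> = 1"
proof -
  obtain i j where ij: "a = of_int i" "b = of_int j" "i \<in> {m..n}" "j \<in> {m..n}"
    using a b by blast
  show ?thesis
  proof
    assume gap: "a \<noteq> b \<and> \<not> (\<exists>x\<in>real_of_int ` {m..n}. min a b < x \<and> x < max a b)"
    show "\<bar>a - b\<bar> = 1"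
    proof (rule ccontr)
      assume "\<bar>a - b\<bar> \<noteq> 1"
      with gap ij have far: "\<bar>i - j\<bar> \<ge> 2" by auto
      define k where "k = min i j + 1"
      have "k \<in> {m..n}" and "min i j < k" and "k < max i j"
        using ij far by (auto simp: k_def)
      then have "real_of_int k \<in> real_of_int ` {m..n} \<and> min a b < real_of_int k \<and> real_of_int k < max a b"
        using ij by (simp add: min_def max_def split: if_splits)
      with gap show False by blast
    qed
  next
    assume unit: "\<bar>a - b\<bar> = 1"
    then have "\<bar>i - j\<bar> = 1" using ij by linarith
    moreover have "\<not> (min i j < k \<and> k < max i j)" if "\<bar>i - j\<bar> = 1" for k :: int
      using that by auto
    ultimately show "a \<noteq> b \<and> \<not> (\<exists>x\<in>real_of_int ` {m..n}. min a b < x \<and> x < max a b)"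
      using ij unit by (auto simp: min_def max_def)
  qed
qed

lemma grid_edge_integer_grid:
  assumes "fst ` T = G" and "snd ` T = G" and "G = real_of_int ` {m..n}"
  shows "grid_edge T u v \<longleftrightarrow> u \<in> G \<times> G \<and> v \<in> G \<times> G \<and> unit_adjacent u v"
proof -
  have step: "(x \<noteq> y \<and> \<not> (\<exists>z\<in>G. min x y < z \<and> z < max x y)) \<longleftrightarrow> \<bar>x - y\<bar> = 1"
    if "x \<in> G" "y \<in> G" for x y
    using consecutive_in_integer_range that assms(3) by blast
  show ?thesis
    unfolding grid_edge_def grid_vertices_def unit_adjacent_def assms(1,2)
    using step[of "fst u" "fst v"] step[of "snd u" "snd v"]
    by (cases u; cases v) (auto simp: mem_Times_iff)
qed

lemma grid_edge_sym: "grid_edge T u v \<Longrightarrow> grid_edge T v u"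
  unfolding grid_edge_def by (auto simp: min.commute max.commute)

lemma empty_rect_iff:
  assumes "p \<in> T" and "q \<in> T"
  shows "empty_rect T p q \<longleftrightarrow> (\<forall>r\<in>T. r \<in> rect p q \<longrightarrow> r = p \<or> r = q)"
  using assms unfolding empty_rect_def rect_def by auto

lemma oriented_boundary_sym: "oriented_boundary T p q = oriented_boundary T q p"
proof -
  have "(fst q - fst p) * (snd q - snd p) = (fst p - fst q) * (snd p - snd q)"
    by (simp add: algebra_simps)
  moreover have "cw_boundary T p q = cw_boundary T q p"
    unfolding cw_boundary_def by (simp add: min.commute max.commute)
  ultimately show ?thesis
    unfolding oriented_boundary_def ccw_boundary_def by simp
qed

lemma N_empty_by_unordered_pairs:
  assumes complete: "\<And>p q. p \<in> T \<Longrightarrow> q \<in> T \<Longrightarrow> p \<noteq> q \<Longrightarrow> empty_rect T p q \<Longrightarrow>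
                       (p, q) \<in> S \<or> (q, p) \<in> S"
    and sound: "\<And>p q. (p, q) \<in> S \<Longrightarrow> p \<in> T \<and> q \<in> T \<and> p \<noteq> q \<and> empty_rect T p q"
  shows "N_empty T = (\<Union>(p, q)\<in>S. oriented_boundary T p q)"
proof (rule equalityI)
  show "N_empty T \<subseteq> (\<Union>(p, q)\<in>S. oriented_boundary T p q)"
    unfolding N_empty_def
    using complete oriented_boundary_sym by (fastforce split: if_splits)
  show "(\<Union>(p, q)\<in>S. oriented_boundary T p q) \<subseteq> N_empty T"
    unfolding N_empty_def using sound by fastforce
qed

lemma oriented_boundary_grid_edge: "(u, v) \<in> oriented_boundary T p q \<Longrightarrow> grid_edge T u v"
  unfolding oriented_boundary_def ccw_boundary_def cw_boundary_def
  by (auto simp: Let_def split: if_splits intro: grid_edge_sym)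

lemma N_empty_oriented:
  assumes "\<forall>(u, v)\<in>N_empty T. (v, u) \<notin> N_empty T"
  shows "oriented_subnetwork T (N_empty T)"
  using assms oriented_boundary_grid_edge
  unfolding oriented_subnetwork_def N_empty_def by (fastforce split: if_splits)

definition clockwise_step :: "point \<Rightarrow> point \<Rightarrow> point \<Rightarrow> point \<Rightarrow> bool" where
  "clockwise_step p q u v \<longleftrightarrow>
    (let x1 = min (fst p) (fst q); x2 = max (fst p) (fst q);
         y1 = min (snd p) (snd q); y2 = max (snd p) (snd q) in
       (snd u = y2 \<and> snd v = y2 \<and> x1 \<le> fst u \<and> fst u < fst v \<and> fst v \<le> x2) \<or>
       (fst u = x2 \<and> fst v = x2 \<and> y1 \<le> snd v \<and> snd v < snd u \<and> snd u \<le> y2) \<or>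
       (snd u = y1 \<and> snd v = y1 \<and> x1 \<le> fst v \<and> fst v < fst u \<and> fst u \<le> x2) \<or>
       (fst u = x1 \<and> fst v = x1 \<and> y1 \<le> snd u \<and> snd u < snd v \<and> snd v \<le> y2))"

definition boundary_list :: "(point \<times> point) list \<Rightarrow> point \<Rightarrow> point \<Rightarrow> (point \<times> point) list" where
  "boundary_list E p q =
     (let cw = filter (\<lambda>(u, v). clockwise_step p q u v) E in
      if (fst q - fst p) * (snd q - snd p) > 0 then cw
      else if (fst q - fst p) * (snd q - snd p) < 0 then map prod.swap cw
      else [])"

lemma oriented_boundary_by_edge_list:
  assumes "set E = {(u, v). grid_edge T u v}"
  shows "oriented_boundary T p q = set (boundary_list E p q)"
proof -
  have "cw_boundary T p q = set (filter (\<lambda>(u, v). clockwise_step p q u v) E)"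
    using assms by (auto simp: cw_boundary_def clockwise_step_def Let_def)
  then show ?thesis
    unfolding oriented_boundary_def ccw_boundary_def boundary_list_def by (auto simp: Let_def)
qed

lemma is_dpath_mono: "N \<subseteq> N' \<Longrightarrow> is_dpath N s t ps \<Longrightarrow> is_dpath N' s t ps"
  unfolding is_dpath_def by blast

lemma oriented_subnetwork_subset:
  "oriented_subnetwork T N' \<Longrightarrow> N \<subseteq> N' \<Longrightarrow> oriented_subnetwork T N"
  unfolding oriented_subnetwork_def by blast

lemma bidirected_manhattan_superset:
  assumes "bidirected_manhattan T N" and "N \<subseteq> N'" and "oriented_subnetwork T N'"
  shows "bidirected_manhattan T N'"
  using assms is_dpath_mono unfolding bidirected_manhattan_def by metis

lemma bidirected_manhattan_by_routes:
  assumes "oriented_subnetwork T N"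
    and covers: "\<forall>t\<in>T. \<forall>t'\<in>T. t \<noteq> t' \<longrightarrow> (\<exists>ps. (t, t', ps) \<in> set R)"
    and valid: "\<forall>(s, t, ps)\<in>set R. is_dpath N s t ps \<and> path_len ps = l1dist s t"
  shows "bidirected_manhattan T N"
  unfolding bidirected_manhattan_def using assms by fastforce

lemma net_length_set: "distinct es \<Longrightarrow> net_length (set es) = sum_list (map edge_len es)"
  unfolding net_length_def by (simp add: sum_list_distinct_conv_sum_set)

lemma net_length_remove:
  assumes "finite N" and "E \<subseteq> N"
  shows "net_length (N - E) = net_length N - net_length E"
  unfolding net_length_def using assms by (simp add: sum_diff)

definition T0 :: "point set" where
  "T0 = {(0, 1), (1, 0), (2, 3), (3, 4), (4, 2)}"

definition G0 :: "real set" where "G0 = {0, 1, 2, 3, 4}"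

lemma G0_integer_range: "G0 = real_of_int ` {0..4}"
proof -
  have "{0..4 :: int} = {0, 1, 2, 3, 4}" by auto
  then show ?thesis by (simp add: G0_def)
qed

lemma T0_coordinates: "fst ` T0 = G0" "snd ` T0 = G0"
  by (auto simp: T0_def G0_def)

definition grid_points0 :: "point list" where
  "grid_points0 = [(x, y). x \<leftarrow> [0, 1, 2, 3, 4], y \<leftarrow> [0, 1, 2, 3, 4]]"

definition grid_edges0 :: "(point \<times> point) list" where
  "grid_edges0 = [(u, v). u \<leftarrow> grid_points0, v \<leftarrow> grid_points0, unit_adjacent u v]"

lemma grid_edges0_set: "set grid_edges0 = {(u, v). grid_edge T0 u v}"
proof -
  have "set grid_points0 = G0 \<times> G0" by (auto simp: grid_points0_def G0_def)
  then show ?thesis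
    unfolding grid_edge_integer_grid[OF T0_coordinates G0_integer_range] grid_edges0_def by auto
qed

definition empty_pairs0 :: "(point \<times> point) set" where
  "empty_pairs0 = {((0, 1), (1, 0)), ((0, 1), (2, 3)), ((0, 1), (4, 2)), ((1, 0), (2, 3)),
                   ((1, 0), (4, 2)), ((2, 3), (3, 4)), ((2, 3), (4, 2)), ((3, 4), (4, 2))}"

lemma empty_rect_T0:
  assumes "p \<in> T0" "q \<in> T0" "p \<noteq> q"
  shows "empty_rect T0 p q \<longleftrightarrow> (p, q) \<in> empty_pairs0 \<or> (q, p) \<in> empty_pairs0"
  using assms unfolding empty_rect_iff[OF assms(1,2)]
  by (simp add: T0_def) (elim disjE; simp add: empty_pairs0_def rect_def)

lemma empty_pairs0_in_T0: "(p, q) \<in> empty_pairs0 \<Longrightarrow> p \<in> T0 \<and> q \<in> T0 \<and> p \<noteq> q"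
  unfolding empty_pairs0_def T0_def by (elim insertE; simp)

lemma N_empty_T0_pairs: "N_empty T0 = (\<Union>(p, q)\<in>empty_pairs0. oriented_boundary T0 p q)"
proof (rule N_empty_by_unordered_pairs)
  fix p q
  assume "p \<in> T0" "q \<in> T0" "p \<noteq> q" "empty_rect T0 p q"
  then show "(p, q) \<in> empty_pairs0 \<or> (q, p) \<in> empty_pairs0"
    using empty_rect_T0 by blast
next
  fix p q
  assume pair: "(p, q) \<in> empty_pairs0"
  then have "p \<in> T0 \<and> q \<in> T0 \<and> p \<noteq> q" by (rule empty_pairs0_in_T0)
  with pair show "p \<in> T0 \<and> q \<in> T0 \<and> p \<noteq> q \<and> empty_rect T0 p q"
    using empty_rect_T0 by blast
qed

definition N34 :: "(point \<times> point) list" where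
  "N34 = [((0,0),(1,0)), ((0,1),(0,0)), ((0,1),(0,2)), ((0,2),(0,3)), ((0,2),(1,2)),
          ((0,3),(1,3)), ((1,0),(1,1)), ((1,1),(0,1)), ((1,1),(1,2)), ((1,2),(1,3)),
          ((1,2),(2,2)), ((1,3),(2,3)), ((2,0),(1,0)), ((2,1),(1,1)), ((2,1),(2,0)),
          ((2,2),(2,1)), ((2,2),(3,2)), ((2,3),(2,2)), ((2,3),(2,4)), ((2,4),(3,4)),
          ((3,0),(2,0)), ((3,1),(2,1)), ((3,2),(4,2)), ((3,3),(2,3)), ((3,3),(3,2)),
          ((3,4),(3,3)), ((4,0),(3,0)), ((4,1),(3,1)), ((4,1),(4,0)), ((4,2),(4,1)),
          ((4,2),(4,3)), ((4,3),(3,3)), ((4,3),(4,4)), ((4,4),(3,4))]"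

lemma N_empty_T0: "N_empty T0 = set N34"
proof -
  have "N_empty T0 = (\<Union>(p, q)\<in>empty_pairs0. set (boundary_list grid_edges0 p q))"
    unfolding N_empty_T0_pairs oriented_boundary_by_edge_list[OF grid_edges0_set] ..
  also have "\<dots> = set N34"
    by (simp add: empty_pairs0_def boundary_list_def clockwise_step_def grid_edges0_def
        grid_points0_def unit_adjacent_def N34_def) (rule equalityI; simp)
  finally show ?thesis .
qed

lemma N_empty_T0_oriented: "oriented_subnetwork T0 (N_empty T0)"
  by (rule N_empty_oriented) (simp add: N_empty_T0 N34_def)

lemma N_empty_T0_length: "net_length (N_empty T0) = 34"
proof -
  have "distinct N34" by (simp add: N34_def)
  then show ?thesis
    unfolding N_empty_T0 by (simp only: net_length_set) (simp add: N34_def edge_len_def l1dist_def)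
qed

text \<open>The two edges at the corner \<open>(4,0)\<close>, which no shortest terminal path needs.\<close>
definition corner0 :: "(point \<times> point) set" where
  "corner0 = {((4, 1), (4, 0)), ((4, 0), (3, 0))}"

definition N32 :: "(point \<times> point) set" where
  "N32 = N_empty T0 - corner0"

lemma N32_length: "net_length N32 = 32"
proof -
  have "finite (N_empty T0)" and "corner0 \<subseteq> N_empty T0"
    by (simp_all add: N_empty_T0 N34_def corner0_def)
  then have "net_length N32 = 34 - net_length corner0"
    unfolding N32_def by (simp only: net_length_remove N_empty_T0_length)
  also have "net_length corner0 = 2"
    by (simp add: corner0_def net_length_def edge_len_def l1dist_def)
  finally show ?thesis by simp
qed

definition routes0 :: "(point \<times> point \<times> point list) list" where
  "routes0 = [
    ((0,1), (1,0), [(0,1),(0,0),(1,0)]),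
    ((0,1), (2,3), [(0,1),(0,2),(0,3),(1,3),(2,3)]),
    ((0,1), (3,4), [(0,1),(0,2),(0,3),(1,3),(2,3),(2,4),(3,4)]),
    ((0,1), (4,2), [(0,1),(0,2),(1,2),(2,2),(3,2),(4,2)]),
    ((1,0), (0,1), [(1,0),(1,1),(0,1)]),
    ((1,0), (2,3), [(1,0),(1,1),(1,2),(1,3),(2,3)]),
    ((1,0), (3,4), [(1,0),(1,1),(1,2),(1,3),(2,3),(2,4),(3,4)]),
    ((1,0), (4,2), [(1,0),(1,1),(1,2),(2,2),(3,2),(4,2)]),
    ((2,3), (0,1), [(2,3),(2,2),(2,1),(1,1),(0,1)]),
    ((2,3), (1,0), [(2,3),(2,2),(2,1),(2,0),(1,0)]),
    ((2,3), (3,4), [(2,3),(2,4),(3,4)]),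
    ((2,3), (4,2), [(2,3),(2,2),(3,2),(4,2)]),
    ((3,4), (0,1), [(3,4),(3,3),(2,3),(2,2),(2,1),(1,1),(0,1)]),
    ((3,4), (1,0), [(3,4),(3,3),(2,3),(2,2),(2,1),(2,0),(1,0)]),
    ((3,4), (2,3), [(3,4),(3,3),(2,3)]),
    ((3,4), (4,2), [(3,4),(3,3),(3,2),(4,2)]),
    ((4,2), (0,1), [(4,2),(4,1),(3,1),(2,1),(1,1),(0,1)]),
    ((4,2), (1,0), [(4,2),(4,1),(3,1),(2,1),(2,0),(1,0)]),
    ((4,2), (2,3), [(4,2),(4,3),(3,3),(2,3)]),
    ((4,2), (3,4), [(4,2),(4,3),(4,4),(3,4)])]"

lemma N32_manhattan: "bidirected_manhattan T0 N32"
proof (rule bidirected_manhattan_by_routes)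
  show "oriented_subnetwork T0 N32"
    using N_empty_T0_oriented unfolding N32_def by (rule oriented_subnetwork_subset) blast
  show "\<forall>t\<in>T0. \<forall>t'\<in>T0. t \<noteq> t' \<longrightarrow> (\<exists>ps. (t, t', ps) \<in> set routes0)"
    by (simp add: T0_def routes0_def)
  show "\<forall>(s, t, ps)\<in>set routes0. is_dpath N32 s t ps \<and> path_len ps = l1dist s t"
    by (simp add: routes0_def N32_def N_empty_T0 N34_def corner0_def is_dpath_def
        path_len_def edge_len_def l1dist_def)
qed

theorem mainTheorem6:
  shows "\<exists>T :: point set. finite T \<and> card T = 5 \<and>
     (\<forall>p\<in>T. \<forall>q\<in>T. p \<noteq> q \<longrightarrow> fst p \<noteq> fst q \<and> snd p \<noteq> snd q) \<and>
     bidirected_manhattan T (N_empty T) \<and> net_length (N_empty T) = 34 \<and>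
     (\<exists>N. bidirected_manhattan T N \<and> net_length N = 32)"
proof (intro exI[of _ T0] conjI)
  show "finite T0" and "card T0 = 5" by (simp_all add: T0_def)
  show "\<forall>p\<in>T0. \<forall>q\<in>T0. p \<noteq> q \<longrightarrow> fst p \<noteq> fst q \<and> snd p \<noteq> snd q"
    by (simp add: T0_def)
  show "bidirected_manhattan T0 (N_empty T0)"
    using N32_manhattan Diff_subset N_empty_T0_oriented
    unfolding N32_def by (rule bidirected_manhattan_superset)
  show "net_length (N_empty T0) = 34" by (rule N_empty_T0_length)
  show "\<exists>N. bidirected_manhattan T0 N \<and> net_length N = 32"
    using N32_manhattan N32_length by blast
qed

end
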